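(* There is an absolute constant $c>0$ such that the following holds. Let $r\ge1$, $\delta>0$, and let $P_1,\dots,P_n\colon\mathbb{F}_2^m\to\mathbb{F}_2$ be functions with $\operatorname{rank}_1(P_i)\le r$ for all $i$. Suppose that for every $i$ and every affine subspace $V+h$ of $\mathbb{F}_2^m$, the distribution of $P_i(Y)$ for $Y$ uniform on $V+h$ has total variation distance at least $\delta$ from $\mathrm{Ber}(1/3)$. Let $\mathcal{P}$ be the distribution of $(P_1(X),\dots,P_n(X))$ for $X$ uniform on $\mathbb{F}_2^m$. Then \[ \|\mathcal{P}-\mathrm{Ber}(1/3)^{\otimes n}\|_{\mathtt{TV}}\ \ge\ 1-2^{-\frac{c^r\delta^{2r}}{r!}\, n + r}. \]
   Context: For $P\colon\mathbb{F}_2^m\to\mathbb{F}_2$ not identically zero, $\operatorname{rank}_1(P)$ is the smallest positive integer $k$ such that $P=\Gamma(L_1,\dots,L_k)$ for some polynomials $L_1,\dots,L_k$ of degree at most $1$ and some function $\Gamma\colon\mathbb{F}_2^k\to\mathbb{F}_2$. Total variation distance: $\|\mathcal{D}_1-\mathcal{D}_2\|_{\mathtt{TV}}=\frac12\sum_x|\mathcal{D}_1(x)-\mathcal{D}_2(x)|$. *)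

theory Defs
  imports Main "HOL-Analysis.Analysis"
begin

text \<open>Vectors of F_2^m are modelled as functions nat => bool vanishing outside {0..<m};
  True = 1, addition is pointwise xor.\<close>

definition cube :: "nat \<Rightarrow> (nat \<Rightarrow> bool) set" where
  "cube m = {x. \<forall>i. m \<le> i \<longrightarrow> \<not> x i}"

definition vadd :: "(nat \<Rightarrow> bool) \<Rightarrow> (nat \<Rightarrow> bool) \<Rightarrow> (nat \<Rightarrow> bool)" where
  "vadd x y = (\<lambda>i. x i \<noteq> y i)"

definition vzero :: "nat \<Rightarrow> bool" where
  "vzero = (\<lambda>i. False)"

text \<open>Linear subspace of F_2^m (over F_2, closure under addition and containing 0 suffices).\<close>
definition lin_subspace :: "nat \<Rightarrow> (nat \<Rightarrow> bool) set \<Rightarrow> bool" where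
  "lin_subspace m V \<longleftrightarrow> V \<subseteq> cube m \<and> vzero \<in> V \<and> (\<forall>x\<in>V. \<forall>y\<in>V. vadd x y \<in> V)"

definition affine_sub :: "nat \<Rightarrow> (nat \<Rightarrow> bool) set \<Rightarrow> (nat \<Rightarrow> bool) \<Rightarrow> (nat \<Rightarrow> bool) set" where
  "affine_sub m V h = (\<lambda>v. vadd v h) ` V"

definition deg_le1 :: "nat \<Rightarrow> ((nat \<Rightarrow> bool) \<Rightarrow> bool) \<Rightarrow> bool" where
  "deg_le1 m L \<longleftrightarrow> (\<exists>c S. S \<subseteq> {0..<m} \<and>
      (\<forall>x\<in>cube m. L x = (c \<noteq> odd (card {i\<in>S. x i}))))"

definition rank1_repr :: "nat \<Rightarrow> ((nat \<Rightarrow> bool) \<Rightarrow> bool) \<Rightarrow> nat \<Rightarrow> bool" where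
  "rank1_repr m P k \<longleftrightarrow> (\<exists>L :: nat \<Rightarrow> (nat \<Rightarrow> bool) \<Rightarrow> bool.
      \<exists>\<Gamma> :: (nat \<Rightarrow> bool) \<Rightarrow> bool.
      (\<forall>j<k. deg_le1 m (L j)) \<and>
      (\<forall>x\<in>cube m. P x = \<Gamma> (\<lambda>j. if j < k then L j x else False)))"

definition rank1 :: "nat \<Rightarrow> ((nat \<Rightarrow> bool) \<Rightarrow> bool) \<Rightarrow> nat" where
  "rank1 m P = (LEAST k. 0 < k \<and> rank1_repr m P k)"

definition tv :: "'a set \<Rightarrow> ('a \<Rightarrow> real) \<Rightarrow> ('a \<Rightarrow> real) \<Rightarrow> real" where
  "tv A D1 D2 = (1/2) * (\<Sum>x\<in>A. \<bar>D1 x - D2 x\<bar>)"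

definition distr_unif :: "'b set \<Rightarrow> ('b \<Rightarrow> 'a) \<Rightarrow> 'a \<Rightarrow> real" where
  "distr_unif S f = (\<lambda>z. real (card {y\<in>S. f y = z}) / real (card S))"

definition ber :: "real \<Rightarrow> bool \<Rightarrow> real" where
  "ber p = (\<lambda>b. if b then p else 1 - p)"

definition ber_prod :: "nat \<Rightarrow> real \<Rightarrow> (nat \<Rightarrow> bool) \<Rightarrow> real" where
  "ber_prod n p = (\<lambda>z. \<Prod>i<n. ber p (z i))"

definition joint :: "nat \<Rightarrow> (nat \<Rightarrow> (nat \<Rightarrow> bool) \<Rightarrow> bool) \<Rightarrow> (nat \<Rightarrow> bool) \<Rightarrow> (nat \<Rightarrow> bool)" where
  "joint n P x = (\<lambda>i. if i < n then P i x else False)"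

end

(* Write each P_i as a function of r parities x |-> <a_p, x>. For a set W of forms, the cells
   {x. <a_p, x> = b_p for p in W} are affine subspaces, so on every cell each P_i is delta-far from
   Ber(1/3), i.e. its Bhattacharyya coefficient with Ber(1/3) is at most 2^(-delta^2/2). If blocks
   C_i of forms are linearly independent modulo W, Fourier analysis shows that they are jointly
   uniform on each cell; hence functions P_i of W and C_i (i in I) are independent there, and the
   overlap sum_z min(P(z), Q(z)) is at most 2^|W| 2^(-delta^2 |I| / 2). Choose I maximal: if it is
   large we are done; otherwise add all its forms to W, after which every other P_j depends on one
   form fewer. After at most r rounds every P_j is constant on cells, and the bookkeeping yields the
   exponent (delta^2/3)^r n / (18 r!). *)

theory Submission
  imports Defs
begin

section \<open>Boolean vectors on an index set\<close>

definition bool_vecs :: "'p set \<Rightarrow> ('p \<Rightarrow> bool) set" where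
  "bool_vecs S = {u. \<forall>p. p \<notin> S \<longrightarrow> \<not> u p}"

definition bool_restrict :: "'p set \<Rightarrow> ('p \<Rightarrow> bool) \<Rightarrow> 'p \<Rightarrow> bool" where
  "bool_restrict S u = (\<lambda>p. p \<in> S \<and> u p)"

lemma bool_vecs_eq_image_Pow: "bool_vecs S = (\<lambda>T p. p \<in> T) ` Pow S"
proof -
  have "u \<in> (\<lambda>T p. p \<in> T) ` Pow S" if "u \<in> bool_vecs S" for u
    using that unfolding bool_vecs_def by (intro image_eqI[of _ _ "{p. u p}"]) auto
  then show ?thesis unfolding bool_vecs_def by auto
qed

lemma finite_bool_vecs [simp]: "finite S \<Longrightarrow> finite (bool_vecs S)"
  by (simp add: bool_vecs_eq_image_Pow)

lemma card_bool_vecs: "finite S \<Longrightarrow> card (bool_vecs S) = 2 ^ card S"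
  unfolding bool_vecs_eq_image_Pow
  by (subst card_image) (auto simp: inj_on_def fun_eq_iff card_Pow)

lemma cube_eq_bool_vecs: "cube m = bool_vecs {..<m}"
  unfolding cube_def bool_vecs_def by auto

lemma finite_cube [simp]: "finite (cube m)"
  by (simp add: cube_eq_bool_vecs)

lemma bool_restrict_in_bool_vecs [simp]: "bool_restrict S u \<in> bool_vecs S"
  unfolding bool_restrict_def bool_vecs_def by auto

lemma bool_restrict_bool_restrict [simp]:
  "S \<subseteq> T \<Longrightarrow> bool_restrict S (bool_restrict T u) = bool_restrict S u"
  unfolding bool_restrict_def by auto

lemma bool_restrict_eq_iff:
  "u \<in> bool_vecs S \<Longrightarrow> bool_restrict S v = u \<longleftrightarrow> (\<forall>p\<in>S. v p = u p)"
  unfolding bool_restrict_def bool_vecs_def by (auto simp: fun_eq_iff)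

lemma prod_of_bool:
  "finite I \<Longrightarrow> (\<Prod>i\<in>I. of_bool (Q i) :: 'a :: comm_semiring_1) = of_bool (\<forall>i\<in>I. Q i)"
  by (induction I rule: finite_induct) auto

lemma sum_bool_vecs_prod:
  fixes f :: "'p \<Rightarrow> bool \<Rightarrow> 'a :: comm_semiring_1"
  assumes "finite A"
  shows "(\<Sum>u\<in>bool_vecs A. \<Prod>i\<in>A. f i (u i)) = (\<Prod>i\<in>A. f i True + f i False)"
proof -
  have "(\<Prod>i\<in>A. f i True + f i False) = (\<Prod>i\<in>A. \<Sum>t\<in>UNIV. f i t)"
    by (simp add: UNIV_bool add.commute)
  also have "\<dots> = (\<Sum>g\<in>PiE A (\<lambda>_. UNIV). \<Prod>i\<in>A. f i (g i))"
    using assms by (intro prod_sum_PiE) auto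
  also have "\<dots> = (\<Sum>u\<in>bool_vecs A. \<Prod>i\<in>A. f i (u i))"
    by (rule sum.reindex_bij_witness[of _ "\<lambda>u. restrict u A" "bool_restrict A"])
       (auto simp: bool_vecs_def bool_restrict_def PiE_def extensional_def fun_eq_iff intro!: prod.cong)
  finally show ?thesis by simp
qed

lemma sum_bool_vecs_UN_prod:
  fixes f :: "'i \<Rightarrow> ('p \<Rightarrow> bool) \<Rightarrow> 'a :: comm_semiring_1"
  assumes I: "finite I" and C: "\<And>i. i \<in> I \<Longrightarrow> finite (C i)" and disj: "disjoint_family_on C I"
  shows "(\<Sum>u\<in>bool_vecs (\<Union>i\<in>I. C i). \<Prod>i\<in>I. f i (bool_restrict (C i) u))
       = (\<Prod>i\<in>I. \<Sum>v\<in>bool_vecs (C i). f i v)"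
proof -
  define glue where "glue g = (\<lambda>p. \<exists>i\<in>I. p \<in> C i \<and> g i p)" for g :: "'i \<Rightarrow> 'p \<Rightarrow> bool"
  have restrict_glue: "bool_restrict (C i) (glue g) = g i"
    if g: "g \<in> PiE I (\<lambda>i. bool_vecs (C i))" and i: "i \<in> I" for g i
  proof
    fix p
    have "p \<in> C i" if "g i p" using g i that by (auto simp: bool_vecs_def)
    moreover have "j = i" if "j \<in> I" "p \<in> C i" "p \<in> C j" for j
      using disj i that unfolding disjoint_family_on_def by blast
    ultimately show "bool_restrict (C i) (glue g) p = g i p"
      unfolding bool_restrict_def glue_def using i by blast
  qed
  have "(\<Prod>i\<in>I. \<Sum>v\<in>bool_vecs (C i). f i v) = (\<Sum>g\<in>PiE I (\<lambda>i. bool_vecs (C i)). \<Prod>i\<in>I. f i (g i))"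
    using assms by (intro prod_sum_PiE) auto
  also have "\<dots> = (\<Sum>u\<in>bool_vecs (\<Union>i\<in>I. C i). \<Prod>i\<in>I. f i (bool_restrict (C i) u))"
  proof (rule sum.reindex_bij_witness[of _ "\<lambda>u. \<lambda>i\<in>I. bool_restrict (C i) u" glue])
    fix g assume g: "g \<in> PiE I (\<lambda>i. bool_vecs (C i))"
    show "(\<lambda>i\<in>I. bool_restrict (C i) (glue g)) = g"
      using g restrict_glue[OF g] by (auto simp: fun_eq_iff PiE_def extensional_def)
    show "glue g \<in> bool_vecs (\<Union>i\<in>I. C i)"
      unfolding glue_def bool_vecs_def by auto
    show "(\<Prod>i\<in>I. f i (bool_restrict (C i) (glue g))) = (\<Prod>i\<in>I. f i (g i))"
      using restrict_glue[OF g] by simp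
  next
    fix u assume "u \<in> bool_vecs (\<Union>i\<in>I. C i)"
    then show "glue (\<lambda>i\<in>I. bool_restrict (C i) u) = u"
      unfolding glue_def bool_vecs_def bool_restrict_def by (auto simp: fun_eq_iff)
  qed auto
  finally show ?thesis by simp
qed

lemma sum_bool_vecs_restrict_prod:
  fixes f :: "'p \<Rightarrow> bool \<Rightarrow> real"
  assumes A: "finite A" and I: "I \<subseteq> A" and y: "y \<in> bool_vecs I"
  shows "(\<Sum>z\<in>{z\<in>bool_vecs A. bool_restrict I z = y}. \<Prod>i\<in>A. f i (z i))
       = (\<Prod>i\<in>I. f i (y i)) * (\<Prod>i\<in>A - I. f i True + f i False)"
proof -
  define g where "g i t = (if i \<in> I then of_bool (t = y i) * f i t else f i t)" for i t
  have "(\<Prod>i\<in>A. g i (z i)) = of_bool (bool_restrict I z = y) * (\<Prod>i\<in>A. f i (z i))" for z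
  proof -
    have "(\<Prod>i\<in>A. g i (z i)) = (\<Prod>i\<in>A. of_bool (i \<in> I \<longrightarrow> z i = y i) * f i (z i))"
      unfolding g_def by (intro prod.cong) auto
    also have "\<dots> = of_bool (\<forall>i\<in>A. i \<in> I \<longrightarrow> z i = y i) * (\<Prod>i\<in>A. f i (z i))"
      using A by (simp add: prod.distrib prod_of_bool)
    also have "(\<forall>i\<in>A. i \<in> I \<longrightarrow> z i = y i) = (bool_restrict I z = y)"
      using I bool_restrict_eq_iff[OF y] by auto
    finally show ?thesis .
  qed
  then have "(\<Sum>z\<in>{z\<in>bool_vecs A. bool_restrict I z = y}. \<Prod>i\<in>A. f i (z i))
           = (\<Sum>z\<in>bool_vecs A. \<Prod>i\<in>A. g i (z i))"
    using A by (simp add: Int_def)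
  also have "\<dots> = (\<Prod>i\<in>A. g i True + g i False)"
    by (rule sum_bool_vecs_prod[OF A])
  also have "\<dots> = (\<Prod>i\<in>A - I. g i True + g i False) * (\<Prod>i\<in>I. g i True + g i False)"
    using I A by (rule prod.subset_diff)
  also have "\<dots> = (\<Prod>i\<in>A - I. f i True + f i False) * (\<Prod>i\<in>I. f i (y i))"
  proof -
    have "g i True + g i False = f i (y i)" if "i \<in> I" for i
      using that by (cases "y i") (simp_all add: g_def)
    then show ?thesis unfolding g_def by (intro arg_cong2[where f = "(*)"] prod.cong refl) auto
  qed
  finally show ?thesis by (simp add: mult.commute)
qed

section \<open>Parities and characters\<close>

definition parity :: "'a set \<Rightarrow> ('a \<Rightarrow> bool) \<Rightarrow> bool" where
  "parity X Q \<longleftrightarrow> odd (card {p\<in>X. Q p})"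

lemma parity_empty [simp]: "parity {} Q = False"
  by (simp add: parity_def)

lemma parity_insert [simp]:
  "finite X \<Longrightarrow> x \<notin> X \<Longrightarrow> parity (insert x X) Q = (Q x \<noteq> parity X Q)"
proof -
  assume "finite X" "x \<notin> X"
  moreover have "{p\<in>insert x X. Q p} = (if Q x then insert x {p\<in>X. Q p} else {p\<in>X. Q p})"
    by auto
  ultimately show ?thesis by (simp add: parity_def)
qed

lemma parity_xor: "finite X \<Longrightarrow> parity X (\<lambda>p. Q p \<noteq> R p) = (parity X Q \<noteq> parity X R)"
  by (induction X rule: finite_induct) auto

lemma parity_Un_disjoint:
  "finite A \<Longrightarrow> finite B \<Longrightarrow> A \<inter> B = {} \<Longrightarrow> parity (A \<union> B) Q = (parity A Q \<noteq> parity B Q)"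
  by (induction A rule: finite_induct) auto

lemma parity_symdiff:
  assumes "finite A" "finite B"
  shows "parity ((A - B) \<union> (B - A)) Q = (parity A Q \<noteq> parity B Q)"
proof -
  have split: "parity X Q = (parity (X - Y) Q \<noteq> parity (X \<inter> Y) Q)" if "finite X" for X Y
    using parity_Un_disjoint[of "X - Y" "X \<inter> Y" Q] that by (simp add: Un_Diff_Int) blast
  have "parity ((A - B) \<union> (B - A)) Q = (parity (A - B) Q \<noteq> parity (B - A) Q)"
    using assms by (intro parity_Un_disjoint) auto
  then show ?thesis
    using split[OF assms(1), of B] split[OF assms(2), of A] by (auto simp: Int_commute)
qed

definition neg_one_pow :: "bool \<Rightarrow> real" where
  "neg_one_pow t = (if t then -1 else 1)"

lemma prod_neg_one_pow: "finite X \<Longrightarrow> (\<Prod>p\<in>X. neg_one_pow (Q p)) = neg_one_pow (parity X Q)"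
  by (induction X rule: finite_induct) (auto simp: neg_one_pow_def)

lemma prod_one_plus_neg_one_pow:
  assumes "finite S"
  shows "(\<Prod>p\<in>S. 1 + neg_one_pow (Q p)) = (\<Sum>X\<in>Pow S. neg_one_pow (parity X Q))"
proof -
  have "(\<Prod>p\<in>S. neg_one_pow (Q p) + 1) = (\<Sum>X\<in>Pow S. \<Prod>p\<in>X. neg_one_pow (Q p))"
    using prod_add[OF assms, of "\<lambda>p. neg_one_pow (Q p)" "\<lambda>_. 1"] by simp
  also have "\<dots> = (\<Sum>X\<in>Pow S. neg_one_pow (parity X Q))"
    using assms by (intro sum.cong refl prod_neg_one_pow) (auto dest: finite_subset)
  finally show ?thesis by (simp add: add.commute)
qed

lemma prod_one_plus_neg_one_pow_indicator:
  assumes "finite S"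
  shows "(\<Prod>p\<in>S. 1 + neg_one_pow (Q p)) = (if \<forall>p\<in>S. \<not> Q p then 2 ^ card S else 0)"
proof (cases "\<forall>p\<in>S. \<not> Q p")
  case True
  then show ?thesis by (simp add: neg_one_pow_def)
next
  case False
  then obtain p where "p \<in> S" "Q p" by auto
  then show ?thesis using assms by (auto simp: neg_one_pow_def intro: prod_zero)
qed

section \<open>Linear forms and their cells\<close>

lemma vadd_in_cube [simp]: "x \<in> cube m \<Longrightarrow> y \<in> cube m \<Longrightarrow> vadd x y \<in> cube m"
  unfolding cube_def vadd_def by auto

lemma vadd_vadd_cancel [simp]: "vadd (vadd x y) y = x"
  unfolding vadd_def by auto

lemma vzero_in_cube [simp]: "vzero \<in> cube m"
  unfolding cube_def vzero_def by auto

lemma cube_ne_empty [simp]: "cube m \<noteq> {}"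
  using vzero_in_cube by blast

text \<open>Only meaningful for \<open>x \<in> cube m\<close>: otherwise the set may be infinite, and \<open>card\<close>
  then returns \<open>0\<close>.\<close>

definition dot :: "(nat \<Rightarrow> bool) \<Rightarrow> (nat \<Rightarrow> bool) \<Rightarrow> bool" where
  "dot s x \<longleftrightarrow> odd (card {i. s i \<and> x i})"

lemma dot_eq_parity: "x \<in> cube m \<Longrightarrow> dot s x = parity {..<m} (\<lambda>i. s i \<and> x i)"
proof -
  assume "x \<in> cube m"
  then have "{i. s i \<and> x i} = {i\<in>{..<m}. s i \<and> x i}"
    unfolding cube_def by (auto simp: not_le[symmetric])
  then show ?thesis unfolding dot_def parity_def by simp
qed

lemma dot_vadd:
  assumes "x \<in> cube m" "y \<in> cube m"
  shows "dot s (vadd x y) = (dot s x \<noteq> dot s y)"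
proof -
  have "dot s (vadd x y) = parity {..<m} (\<lambda>i. s i \<and> vadd x y i)"
    by (rule dot_eq_parity[OF vadd_in_cube[OF assms]])
  also have "\<dots> = parity {..<m} (\<lambda>i. (s i \<and> x i) \<noteq> (s i \<and> y i))"
    unfolding vadd_def by (rule arg_cong[where f = "parity {..<m}"]) (auto simp: fun_eq_iff)
  also have "\<dots> = (parity {..<m} (\<lambda>i. s i \<and> x i) \<noteq> parity {..<m} (\<lambda>i. s i \<and> y i))"
    by (rule parity_xor) simp
  finally show ?thesis using assms by (simp add: dot_eq_parity)
qed

lemma dot_vzero [simp]: "dot s vzero = False"
  unfolding dot_def vzero_def by simp

lemma sum_neg_one_pow_eq_0:
  assumes x0: "x0 \<in> cube m" and flip: "\<And>x. x \<in> cube m \<Longrightarrow> f (vadd x x0) = (\<not> f x)"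
  shows "(\<Sum>x\<in>cube m. neg_one_pow (f x)) = 0"
proof -
  have "(\<Sum>x\<in>cube m. neg_one_pow (f x)) = (\<Sum>x\<in>cube m. neg_one_pow (f (vadd x x0)))"
    by (rule sum.reindex_bij_witness[of _ "\<lambda>x. vadd x x0" "\<lambda>x. vadd x x0"]) (use x0 in auto)
  also have "\<dots> = (\<Sum>x\<in>cube m. - neg_one_pow (f x))"
    by (intro sum.cong refl) (simp add: flip neg_one_pow_def)
  also have "\<dots> = - (\<Sum>x\<in>cube m. neg_one_pow (f x))"
    by (simp add: sum_negf)
  finally show ?thesis by simp
qed

definition cell :: "nat \<Rightarrow> ('p \<Rightarrow> nat \<Rightarrow> bool) \<Rightarrow> 'p set \<Rightarrow> ('p \<Rightarrow> bool) \<Rightarrow> (nat \<Rightarrow> bool) set" where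
  "cell m a W b = {x\<in>cube m. \<forall>p\<in>W. dot (a p) x = b p}"

lemma cell_subset_cube: "cell m a W b \<subseteq> cube m"
  unfolding cell_def by auto

lemma finite_cell [simp]: "finite (cell m a W b)"
  using cell_subset_cube finite_cube by (rule finite_subset)

lemma cell_empty_forms [simp]: "cell m a {} b = cube m"
  unfolding cell_def by simp

lemma cell_is_affine_sub:
  assumes x0: "x0 \<in> cell m a W b"
  shows "\<exists>V h. lin_subspace m V \<and> h \<in> cube m \<and> affine_sub m V h = cell m a W b"
proof (intro exI conjI)
  define V where "V = {x\<in>cube m. \<forall>p\<in>W. \<not> dot (a p) x}"
  have x0_cube: "x0 \<in> cube m" using x0 cell_subset_cube by blast
  show "lin_subspace m V"
    unfolding lin_subspace_def V_def by (auto simp: dot_vadd)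
  show "x0 \<in> cube m" by (fact x0_cube)
  have "x \<in> affine_sub m V x0" if "x \<in> cell m a W b" for x
  proof -
    have "vadd x x0 \<in> V" using that x0 unfolding V_def cell_def by (auto simp: dot_vadd)
    then show ?thesis unfolding affine_sub_def by (intro image_eqI[of _ _ "vadd x x0"]) auto
  qed
  moreover have "affine_sub m V x0 \<subseteq> cell m a W b"
    using x0 x0_cube unfolding affine_sub_def V_def cell_def by (auto simp: dot_vadd)
  ultimately show "affine_sub m V x0 = cell m a W b" by blast
qed

lemma tv_cell_ge_of_affine_sub:
  assumes "\<forall>V h. lin_subspace m V \<longrightarrow> h \<in> cube m \<longrightarrow> \<delta> \<le> tv UNIV (distr_unif (affine_sub m V h) f) (ber p)"
    and "cell m a W b \<noteq> {}"
  shows "\<delta> \<le> tv UNIV (distr_unif (cell m a W b) f) (ber p)"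
proof -
  obtain V h where "lin_subspace m V" "h \<in> cube m" "affine_sub m V h = cell m a W b"
    using cell_is_affine_sub assms(2) by blast
  then show ?thesis using assms(1) by metis
qed

text \<open>The forms \<open>a p\<close>, \<open>p \<in> L\<close>, are linearly independent modulo the span of the forms
  \<open>a p\<close>, \<open>p \<in> W\<close>.\<close>

definition indep_mod :: "nat \<Rightarrow> ('p \<Rightarrow> nat \<Rightarrow> bool) \<Rightarrow> 'p set \<Rightarrow> 'p set \<Rightarrow> bool" where
  "indep_mod m a W L \<longleftrightarrow> (\<forall>T\<subseteq>L. \<forall>R\<subseteq>W. T \<noteq> {} \<longrightarrow>
      (\<exists>x\<in>cube m. parity T (\<lambda>p. dot (a p) x) \<noteq> parity R (\<lambda>p. dot (a p) x)))"

lemma indep_mod_empty [simp]: "indep_mod m a W {}"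
  unfolding indep_mod_def by auto

lemma indep_mod_subset: "indep_mod m a W L \<Longrightarrow> L' \<subseteq> L \<Longrightarrow> indep_mod m a W L'"
  unfolding indep_mod_def by (meson order_trans)

lemma indep_mod_disjoint: "indep_mod m a W L \<Longrightarrow> W \<inter> L = {}"
  unfolding indep_mod_def by (metis disjoint_iff empty_subsetI insert_not_empty insert_subset)

lemma card_cell_mult_power:
  assumes "finite S"
  shows "real (card (cell m a S e)) * 2 ^ card S
       = (\<Sum>X\<in>Pow S. \<Sum>x\<in>cube m. neg_one_pow (parity X (\<lambda>p. dot (a p) x \<noteq> e p)))"
proof -
  have "real (card (cell m a S e)) * 2 ^ card S
      = (\<Sum>x\<in>cube m. if \<forall>p\<in>S. \<not> (dot (a p) x \<noteq> e p) then 2 ^ card S else 0)"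
    unfolding cell_def by (simp add: sum.If_cases Int_def)
  also have "\<dots> = (\<Sum>x\<in>cube m. \<Prod>p\<in>S. 1 + neg_one_pow (dot (a p) x \<noteq> e p))"
    using assms by (simp add: prod_one_plus_neg_one_pow_indicator)
  also have "\<dots> = (\<Sum>x\<in>cube m. \<Sum>X\<in>Pow S. neg_one_pow (parity X (\<lambda>p. dot (a p) x \<noteq> e p)))"
    using assms by (simp add: prod_one_plus_neg_one_pow)
  finally show ?thesis by (simp add: sum.swap[of _ "cube m"])
qed

lemma sum_neg_one_pow_forms_eq_0:
  assumes X: "finite X" and x0: "x0 \<in> cube m" "parity X (\<lambda>p. dot (a p) x0)"
  shows "(\<Sum>x\<in>cube m. neg_one_pow (parity X (\<lambda>p. dot (a p) x \<noteq> e p))) = 0"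
proof (rule sum_neg_one_pow_eq_0[OF x0(1)])
  fix x assume x: "x \<in> cube m"
  have "parity X (\<lambda>p. dot (a p) (vadd x x0) \<noteq> e p)
      = parity X (\<lambda>p. (dot (a p) x \<noteq> e p) \<noteq> dot (a p) x0)"
    using x x0 by (intro arg_cong[where f = "parity X"]) (auto simp: dot_vadd fun_eq_iff)
  also have "\<dots> = (parity X (\<lambda>p. dot (a p) x \<noteq> e p) \<noteq> parity X (\<lambda>p. dot (a p) x0))"
    by (rule parity_xor[OF X])
  finally show "parity X (\<lambda>p. dot (a p) (vadd x x0) \<noteq> e p) = (\<not> parity X (\<lambda>p. dot (a p) x \<noteq> e p))"
    using x0(2) by simp
qed

text \<open>Fourier expansion of the cell indicator: only characters of sets \<open>X \<subseteq> W\<close> survive.\<close>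

lemma card_cell_Un:
  assumes W: "finite W" and L: "finite L" and ind: "indep_mod m a W L"
  shows "real (card (cell m a (W \<union> L) e)) * 2 ^ card L = real (card (cell m a W e))"
proof -
  define F where "F X = (\<Sum>x\<in>cube m. neg_one_pow (parity X (\<lambda>p. dot (a p) x \<noteq> e p)))" for X
  have disj: "W \<inter> L = {}" using indep_mod_disjoint[OF ind] .
  have "F X = 0" if X: "X \<in> Pow (W \<union> L) - Pow W" for X
  proof -
    have "X \<inter> L \<noteq> {}" using X by auto
    then obtain x0 where x0: "x0 \<in> cube m"
      and ne: "parity (X \<inter> L) (\<lambda>p. dot (a p) x0) \<noteq> parity (X \<inter> W) (\<lambda>p. dot (a p) x0)"
      using ind unfolding indep_mod_def by (meson inf_le2)
    have "(X \<inter> L) \<union> (X \<inter> W) = X" using X by auto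
    moreover have "(X \<inter> L) \<inter> (X \<inter> W) = {}" using disj by auto
    ultimately have "parity X (\<lambda>p. dot (a p) x0)"
      using ne W L parity_Un_disjoint[of "X \<inter> L" "X \<inter> W" "\<lambda>p. dot (a p) x0"] by auto
    then show ?thesis
      unfolding F_def using X W L x0 by (intro sum_neg_one_pow_forms_eq_0) (auto dest: finite_subset)
  qed
  then have "(\<Sum>X\<in>Pow (W \<union> L). F X) = (\<Sum>X\<in>Pow W. F X)"
    using W L by (intro sum.mono_neutral_right) auto
  moreover have "card (W \<union> L) = card W + card L"
    using W L disj by (simp add: card_Un_disjoint)
  ultimately have "real (card (cell m a (W \<union> L) e)) * 2 ^ card L * 2 ^ card W
                 = real (card (cell m a W e)) * 2 ^ card W"
    using card_cell_mult_power[of "W \<union> L" m a e] card_cell_mult_power[OF W, of m a e] W L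
    unfolding F_def by (simp add: power_add mult_ac)
  then show ?thesis by simp
qed

section \<open>Uniform distributions\<close>

lemma distr_unif_cong: "(\<And>x. x \<in> A \<Longrightarrow> f x = g x) \<Longrightarrow> distr_unif A f = distr_unif A g"
proof -
  assume "\<And>x. x \<in> A \<Longrightarrow> f x = g x"
  then have "{y\<in>A. f y = z} = {y\<in>A. g y = z}" for z by auto
  then show ?thesis unfolding distr_unif_def by simp
qed

lemma distr_unif_nonneg [simp]: "0 \<le> distr_unif A f z"
  by (simp add: distr_unif_def)

lemma distr_unif_comp:
  assumes A: "finite A" and B: "finite B" "f ` A \<subseteq> B"
  shows "distr_unif A (\<lambda>x. g (f x)) y = (\<Sum>z\<in>{z\<in>B. g z = y}. distr_unif A f z)"
proof -
  have "f ` {x\<in>A. g (f x) = y} \<subseteq> {z\<in>B. g z = y}"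
    using B by auto
  then have "real (card {x\<in>A. g (f x) = y})
      = (\<Sum>z\<in>{z\<in>B. g z = y}. real (card {x\<in>{x\<in>A. g (f x) = y}. f x = z}))"
    using sum.group[of "{x\<in>A. g (f x) = y}" "{z\<in>B. g z = y}" f "\<lambda>_. 1 :: real"] A B by simp
  also have "\<dots> = (\<Sum>z\<in>{z\<in>B. g z = y}. real (card {x\<in>A. f x = z}))"
    by (intro sum.cong refl arg_cong[where f = "\<lambda>X. real (card X)"]) auto
  finally show ?thesis unfolding distr_unif_def by (simp add: sum_divide_distrib)
qed

lemma sum_distr_unif:
  assumes "finite A" "A \<noteq> {}" "finite B" "f ` A \<subseteq> B"
  shows "sum (distr_unif A f) B = 1"
  using distr_unif_comp[OF assms(1,3,4), of "\<lambda>_. ()" "()"] assms by (simp add: distr_unif_def)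

lemma distr_unif_comp_uniform:
  assumes A: "finite A" and B: "finite B" "f ` A \<subseteq> B"
    and unif: "\<And>u. u \<in> B \<Longrightarrow> distr_unif A f u = 1 / card B"
  shows "distr_unif A (\<lambda>x. g (f x)) = distr_unif B g"
proof
  fix y
  have "distr_unif A (\<lambda>x. g (f x)) y = (\<Sum>z\<in>{z\<in>B. g z = y}. 1 / card B)"
    using distr_unif_comp[OF A B, of g y] unif by simp
  then show "distr_unif A (\<lambda>x. g (f x)) y = distr_unif B g y"
    by (simp add: distr_unif_def)
qed

lemma distr_unif_eq_ber:
  assumes "finite A" "A \<noteq> {}"
  shows "distr_unif A f = ber (card {x\<in>A. f x} / card A)"
proof
  fix t
  have "card {x\<in>A. f x} + card {x\<in>A. \<not> f x} = card A"
    using assms(1) by (subst card_Un_disjoint[symmetric]) (auto intro: arg_cong[where f = card])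
  then have "real (card {x\<in>A. \<not> f x}) / card A = 1 - card {x\<in>A. f x} / card A"
    using assms by (simp add: field_simps flip: of_nat_add)
  then show "distr_unif A f t = ber (card {x\<in>A. f x} / card A) t"
    by (cases t) (simp_all add: distr_unif_def ber_def)
qed

lemma sum_ber_prod: "sum (ber_prod n p) (cube n) = 1"
  using sum_bool_vecs_prod[of "{..<n}" "\<lambda>_. ber p"] by (simp add: ber_prod_def cube_eq_bool_vecs ber_def)

lemma distr_unif_cell_forms:
  assumes W: "finite W" and S: "finite S" and ind: "indep_mod m a W S" and ne: "cell m a W b \<noteq> {}"
  shows "distr_unif (cell m a W b) (\<lambda>x. h (bool_restrict S (\<lambda>p. dot (a p) x))) = distr_unif (bool_vecs S) h"
proof (rule distr_unif_comp_uniform)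
  fix u assume u: "u \<in> bool_vecs S"
  define e where "e p = (if p \<in> W then b p else u p)" for p
  have "{x\<in>cell m a W b. bool_restrict S (\<lambda>p. dot (a p) x) = u} = cell m a (W \<union> S) e"
    using indep_mod_disjoint[OF ind] unfolding cell_def e_def bool_restrict_eq_iff[OF u] by auto
  moreover have "cell m a W b = cell m a W e"
    unfolding cell_def e_def by auto
  ultimately show "distr_unif (cell m a W b) (\<lambda>x. bool_restrict S (\<lambda>p. dot (a p) x)) u = 1 / card (bool_vecs S)"
    using card_cell_Un[OF W S ind, of e] ne card_bool_vecs[OF S] unfolding distr_unif_def
    by (simp add: field_simps)
qed (use S in auto)

lemma distr_unif_bool_vecs_UN:
  assumes I: "finite I" and C: "\<And>i. i \<in> I \<Longrightarrow> finite (C i)" and disj: "disjoint_family_on C I"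
    and y: "y \<in> bool_vecs I"
  shows "distr_unif (bool_vecs (\<Union>i\<in>I. C i)) (\<lambda>u. bool_restrict I (\<lambda>i. H i (bool_restrict (C i) u))) y
       = (\<Prod>i\<in>I. distr_unif (bool_vecs (C i)) (H i) (y i))"
proof -
  let ?U = "bool_vecs (\<Union>i\<in>I. C i)"
  have "real (card {u\<in>?U. bool_restrict I (\<lambda>i. H i (bool_restrict (C i) u)) = y})
      = (\<Sum>u\<in>?U. \<Prod>i\<in>I. of_bool (H i (bool_restrict (C i) u) = y i))"
    using I C by (simp add: prod_of_bool bool_restrict_eq_iff[OF y] Int_def)
  also have "\<dots> = (\<Prod>i\<in>I. \<Sum>v\<in>bool_vecs (C i). of_bool (H i v = y i))"
    by (rule sum_bool_vecs_UN_prod[OF I C disj])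
  also have "\<dots> = (\<Prod>i\<in>I. real (card {v\<in>bool_vecs (C i). H i v = y i}))"
    using C by (intro prod.cong refl) (simp add: Int_def)
  finally have count: "real (card {u\<in>?U. bool_restrict I (\<lambda>i. H i (bool_restrict (C i) u)) = y})
      = (\<Prod>i\<in>I. real (card {v\<in>bool_vecs (C i). H i v = y i}))" .
  have "real (card ?U) = (\<Prod>i\<in>I. real (card (bool_vecs (C i))))"
    using sum_bool_vecs_UN_prod[OF I C disj, of "\<lambda>_ _. 1 :: real"] I C by simp
  then show ?thesis
    unfolding distr_unif_def count by (simp add: prod_dividef)
qed

section \<open>Functions of few forms\<close>

definition determined_by :: "nat \<Rightarrow> ('p \<Rightarrow> nat \<Rightarrow> bool) \<Rightarrow> 'p set \<Rightarrow> ((nat \<Rightarrow> bool) \<Rightarrow> 'b) \<Rightarrow> bool" where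
  "determined_by m a S f \<longleftrightarrow> (\<exists>G. \<forall>x\<in>cube m. f x = G (bool_restrict S (\<lambda>p. dot (a p) x)))"

lemma determined_by_mono:
  assumes "determined_by m a S f" "S \<subseteq> S'"
  shows "determined_by m a S' f"
proof -
  obtain G where G: "\<forall>x\<in>cube m. f x = G (bool_restrict S (\<lambda>p. dot (a p) x))"
    using assms(1) unfolding determined_by_def by blast
  then have "\<forall>x\<in>cube m. f x = G (bool_restrict S (bool_restrict S' (\<lambda>p. dot (a p) x)))"
    using assms(2) by simp
  then show ?thesis
    unfolding determined_by_def by (intro exI[of _ "\<lambda>v. G (bool_restrict S v)"]) auto
qed

lemma determined_by_reindex:
  assumes "determined_by m a S f" "\<And>p. p \<in> S \<Longrightarrow> a' (g p) = a p"
  shows "determined_by m a' (g ` S) f"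
proof -
  obtain G where G: "\<forall>x\<in>cube m. f x = G (bool_restrict S (\<lambda>p. dot (a p) x))"
    using assms(1) unfolding determined_by_def by blast
  have "bool_restrict S (\<lambda>p. dot (a p) x) = (\<lambda>p. p \<in> S \<and> bool_restrict (g ` S) (\<lambda>q. dot (a' q) x) (g p))" for x
    using assms(2) by (intro ext) (auto simp: bool_restrict_def, metis)
  then show ?thesis
    unfolding determined_by_def using G by (intro exI[of _ "\<lambda>v. G (\<lambda>p. p \<in> S \<and> v (g p))"]) auto
qed

lemma determined_by_remove:
  assumes f: "determined_by m a S f" and p0: "p0 \<in> S" and T: "finite T" "T \<subseteq> S - {p0}"
    and comb: "\<And>x. x \<in> cube m \<Longrightarrow> dot (a p0) x = parity T (\<lambda>p. dot (a p) x)"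
  shows "determined_by m a (S - {p0}) f"
proof -
  obtain G where G: "\<forall>x\<in>cube m. f x = G (bool_restrict S (\<lambda>p. dot (a p) x))"
    using f unfolding determined_by_def by blast
  define extend where "extend v = v(p0 := parity T v)" for v
  have "extend (bool_restrict (S - {p0}) (\<lambda>p. dot (a p) x)) = bool_restrict S (\<lambda>p. dot (a p) x)"
    if "x \<in> cube m" for x
  proof -
    have "{p\<in>T. bool_restrict (S - {p0}) (\<lambda>p. dot (a p) x) p} = {p\<in>T. dot (a p) x}"
      using T by (auto simp: bool_restrict_def)
    then have "parity T (bool_restrict (S - {p0}) (\<lambda>p. dot (a p) x)) = parity T (\<lambda>p. dot (a p) x)"
      by (simp add: parity_def)
    then show ?thesis
      using comb[OF that] p0 unfolding extend_def bool_restrict_def by (auto simp: fun_eq_iff)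
  qed
  then show ?thesis
    unfolding determined_by_def using G by (intro exI[of _ "\<lambda>v. G (extend v)"]) auto
qed

text \<open>A linear dependency of the forms in \<open>C \<union> L\<close> modulo \<open>W\<close> must involve some \<open>p0 \<in> C - L\<close>,
  which can then be eliminated in favour of the other forms.\<close>

lemma determined_by_drop_dependent:
  assumes W: "finite W" and C: "finite C" and L: "finite L"
    and ind: "indep_mod m a W L" and dep: "\<not> indep_mod m a W (C \<union> L)"
    and f: "determined_by m a (W \<union> C) f"
  shows "\<exists>p0\<in>C. determined_by m a (W \<union> L \<union> (C - {p0})) f"
proof -
  obtain T R where TR: "T \<subseteq> C \<union> L" "R \<subseteq> W" "T \<noteq> {}"
    and eq: "\<And>x. x \<in> cube m \<Longrightarrow> parity T (\<lambda>p. dot (a p) x) = parity R (\<lambda>p. dot (a p) x)"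
    using dep unfolding indep_mod_def by blast
  have "\<not> T \<subseteq> L"
    using ind TR eq unfolding indep_mod_def by blast
  then obtain p0 where p0: "p0 \<in> T" "p0 \<notin> L" by blast
  with TR have p0C: "p0 \<in> C" by blast
  have fS: "determined_by m a (W \<union> L \<union> C) f"
    using f by (rule determined_by_mono) auto
  show ?thesis
  proof (cases "p0 \<in> W")
    case True
    then have "W \<union> L \<union> (C - {p0}) = W \<union> L \<union> C" using p0C by auto
    then show ?thesis using fS p0C by (intro bexI[of _ p0]) auto
  next
    case False
    have fin: "finite T" "finite R" using TR W C L by (auto dest: finite_subset)
    have "determined_by m a (W \<union> L \<union> C - {p0}) f"
    proof (rule determined_by_remove[OF fS _ _ _])
      show "p0 \<in> W \<union> L \<union> C" using p0C by blast
      show "finite ((T - {p0} - R) \<union> (R - (T - {p0})))" using fin by blast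
      show "(T - {p0} - R) \<union> (R - (T - {p0})) \<subseteq> W \<union> L \<union> C - {p0}" using TR False by blast
      fix x assume x: "x \<in> cube m"
      have "parity T (\<lambda>p. dot (a p) x) = (dot (a p0) x \<noteq> parity (T - {p0}) (\<lambda>p. dot (a p) x))"
        using parity_insert[of "T - {p0}" p0] fin p0(1) by (simp add: insert_absorb)
      then show "dot (a p0) x = parity ((T - {p0} - R) \<union> (R - (T - {p0}))) (\<lambda>p. dot (a p) x)"
        using eq[OF x] parity_symdiff[of "T - {p0}" R] fin by auto
    qed
    moreover have "W \<union> L \<union> C - {p0} = W \<union> L \<union> (C - {p0})" using False p0 by auto
    ultimately show ?thesis using p0C by (intro bexI[of _ p0]) auto
  qed
qed

lemma determined_by_on_cell:
  assumes "determined_by m a (W \<union> C) f"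
  shows "\<exists>H. \<forall>x\<in>cell m a W b. f x = H (bool_restrict C (\<lambda>p. dot (a p) x))"
proof -
  obtain G where G: "\<forall>x\<in>cube m. f x = G (bool_restrict (W \<union> C) (\<lambda>p. dot (a p) x))"
    using assms unfolding determined_by_def by blast
  have "f x = G (\<lambda>p. if p \<in> W then b p else bool_restrict C (\<lambda>p. dot (a p) x) p)"
    if "x \<in> cell m a W b" for x
  proof -
    have "bool_restrict (W \<union> C) (\<lambda>p. dot (a p) x)
        = (\<lambda>p. if p \<in> W then b p else bool_restrict C (\<lambda>p. dot (a p) x) p)"
      using that unfolding cell_def bool_restrict_def by auto
    moreover have "f x = G (bool_restrict (W \<union> C) (\<lambda>p. dot (a p) x))"
      using G that cell_subset_cube by blast
    ultimately show ?thesis by simp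
  qed
  then show ?thesis by (intro exI[of _ "\<lambda>v. G (\<lambda>p. if p \<in> W then b p else v p)"]) auto
qed

lemma distr_unif_cell_joint:
  assumes W: "finite W" and I: "finite I" and C: "\<And>i. i \<in> I \<Longrightarrow> finite (C i)"
    and disj: "disjoint_family_on C I" and ind: "indep_mod m a W (\<Union>i\<in>I. C i)"
    and P: "\<And>i. i \<in> I \<Longrightarrow> determined_by m a (W \<union> C i) (P i)"
    and ne: "cell m a W b \<noteq> {}" and y: "y \<in> bool_vecs I"
  shows "distr_unif (cell m a W b) (\<lambda>x. bool_restrict I (\<lambda>i. P i x)) y
       = (\<Prod>i\<in>I. distr_unif (cell m a W b) (P i) (y i))"
proof -
  let ?A = "cell m a W b" and ?L = "\<Union>i\<in>I. C i"
  let ?forms = "\<lambda>S x. bool_restrict S (\<lambda>p. dot (a p) x)"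
  have "\<forall>i\<in>I. \<exists>Hi. \<forall>x\<in>?A. P i x = Hi (?forms (C i) x)"
    using determined_by_on_cell[OF P] by blast
  then obtain H where H: "\<forall>i\<in>I. \<forall>x\<in>?A. P i x = H i (?forms (C i) x)"
    by (rule bchoice[THEN exE])
  have "distr_unif ?A (\<lambda>x. bool_restrict I (\<lambda>i. P i x))
      = distr_unif ?A (\<lambda>x. bool_restrict I (\<lambda>i. H i (bool_restrict (C i) (?forms ?L x))))"
  proof (rule distr_unif_cong)
    fix x assume x: "x \<in> ?A"
    have "bool_restrict (C i) (?forms ?L x) = ?forms (C i) x" if "i \<in> I" for i
      using that by (intro bool_restrict_bool_restrict) auto
    then show "bool_restrict I (\<lambda>i. P i x)
             = bool_restrict I (\<lambda>i. H i (bool_restrict (C i) (?forms ?L x)))"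
      using H x unfolding bool_restrict_def[of I] by (intro ext) auto
  qed
  also have "\<dots> = distr_unif (bool_vecs ?L) (\<lambda>u. bool_restrict I (\<lambda>i. H i (bool_restrict (C i) u)))"
    using W I C ind ne by (intro distr_unif_cell_forms) auto
  finally have "distr_unif ?A (\<lambda>x. bool_restrict I (\<lambda>i. P i x)) y
      = (\<Prod>i\<in>I. distr_unif (bool_vecs (C i)) (H i) (y i))"
    using distr_unif_bool_vecs_UN[OF I C disj y] by simp
  also have "\<dots> = (\<Prod>i\<in>I. distr_unif ?A (P i) (y i))"
  proof (intro prod.cong refl)
    fix i assume i: "i \<in> I"
    have "distr_unif ?A (P i) = distr_unif ?A (\<lambda>x. H i (?forms (C i) x))"
      using H i by (intro distr_unif_cong) auto
    also have "\<dots> = distr_unif (bool_vecs (C i)) (H i)"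
      using W C i ne indep_mod_subset[OF ind] by (intro distr_unif_cell_forms) auto
    finally show "distr_unif (bool_vecs (C i)) (H i) (y i) = distr_unif ?A (P i) (y i)" by simp
  qed
  finally show ?thesis .
qed

lemma rank1_repr_Suc_dim: "rank1_repr m f (Suc m)"
proof -
  define L where "L j x \<longleftrightarrow> j < m \<and> x j" for j and x :: "nat \<Rightarrow> bool"
  have "deg_le1 m (L j)" for j
  proof -
    have "{i\<in>{i. i = j \<and> i < m}. x i} = (if L j x then {j} else {})" for x
      unfolding L_def by auto
    then have "L j x = (False \<noteq> odd (card {i\<in>{i. i = j \<and> i < m}. x i}))" for x
      by simp
    moreover have "{i. i = j \<and> i < m} \<subseteq> {0..<m}" by auto
    ultimately show ?thesis unfolding deg_le1_def by blast
  qed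
  moreover have "x = (\<lambda>j. j < m \<and> (if j < Suc m then L j x else False))" if "x \<in> cube m" for x
    using that unfolding L_def cube_def by (auto simp: fun_eq_iff not_le[symmetric])
  ultimately show ?thesis
    unfolding rank1_repr_def by (intro exI[of _ L] exI[of _ "\<lambda>z. f (\<lambda>j. j < m \<and> z j)"]) auto
qed

lemma determined_by_of_rank1_le:
  assumes "rank1 m f \<le> r"
  shows "\<exists>s. determined_by m s {..<r} f"
proof -
  let ?k = "rank1 m f"
  have "rank1_repr m f ?k"
    unfolding rank1_def using LeastI_ex[of "\<lambda>k. 0 < k \<and> rank1_repr m f k"] rank1_repr_Suc_dim by blast
  then obtain L \<Gamma> where L: "\<forall>j<?k. deg_le1 m (L j)"
    and \<Gamma>: "\<forall>x\<in>cube m. f x = \<Gamma> (\<lambda>j. if j < ?k then L j x else False)"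
    unfolding rank1_repr_def by blast
  have "\<exists>cS. \<forall>x\<in>cube m. L j x = (fst cS \<noteq> dot (\<lambda>i. i \<in> snd cS) x)" if j: "j < ?k" for j
  proof -
    obtain c S where "\<forall>x\<in>cube m. L j x = (c \<noteq> odd (card {i\<in>S. x i}))"
      using L[rule_format, OF j] unfolding deg_le1_def by blast
    then show ?thesis unfolding dot_def by (intro exI[of _ "(c, S)"]) simp
  qed
  then have "\<forall>j\<in>{..<?k}. \<exists>cS. \<forall>x\<in>cube m. L j x = (fst cS \<noteq> dot (\<lambda>i. i \<in> snd cS) x)"
    by blast
  then obtain cS where cS: "\<forall>j\<in>{..<?k}. \<forall>x\<in>cube m. L j x = (fst (cS j) \<noteq> dot (\<lambda>i. i \<in> snd (cS j)) x)"
    by (rule bchoice[THEN exE])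
  define s where "s j = (\<lambda>i. i \<in> snd (cS j))" for j
  have "f x = \<Gamma> (\<lambda>j. if j < ?k then fst (cS j) \<noteq> bool_restrict {..<r} (\<lambda>j. dot (s j) x) j else False)"
    if "x \<in> cube m" for x
    using \<Gamma> cS assms that unfolding s_def bool_restrict_def by (auto intro!: arg_cong[where f = \<Gamma>])
  then show ?thesis
    unfolding determined_by_def
    by (intro exI[of _ s] exI[of _ "\<lambda>v. \<Gamma> (\<lambda>j. if j < ?k then fst (cS j) \<noteq> v j else False)"]) auto
qed

lemma exists_forms_of_rank1_le:
  assumes "\<forall>i<n. rank1 m (P i) \<le> r"
  shows "\<exists>a. \<forall>i<n. determined_by m a (Pair i ` {..<r}) (P i)"
proof -
  have "\<forall>i\<in>{..<n}. \<exists>s. determined_by m s {..<r} (P i)"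
    using assms determined_by_of_rank1_le by blast
  then obtain s where s: "\<forall>i\<in>{..<n}. determined_by m (s i) {..<r} (P i)"
    by (rule bchoice[THEN exE])
  have "determined_by m (\<lambda>(i, j). s i j) (Pair i ` {..<r}) (P i)" if "i < n" for i
    using s that by (auto intro: determined_by_reindex)
  then show ?thesis by blast
qed

section \<open>Overlap and Bhattacharyya coefficient\<close>

definition overlap :: "'a set \<Rightarrow> ('a \<Rightarrow> real) \<Rightarrow> ('a \<Rightarrow> real) \<Rightarrow> real" where
  "overlap A D1 D2 = (\<Sum>x\<in>A. min (D1 x) (D2 x))"

definition bhattacharyya :: "'a set \<Rightarrow> ('a \<Rightarrow> real) \<Rightarrow> ('a \<Rightarrow> real) \<Rightarrow> real" where
  "bhattacharyya A D1 D2 = (\<Sum>x\<in>A. sqrt (D1 x * D2 x))"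

lemma tv_eq_1_minus_overlap:
  assumes "finite A" "sum D1 A = 1" "sum D2 A = 1"
  shows "tv A D1 D2 = 1 - overlap A D1 D2"
proof -
  have "(\<Sum>x\<in>A. \<bar>D1 x - D2 x\<bar>) = (\<Sum>x\<in>A. D1 x + D2 x - 2 * min (D1 x) (D2 x))"
    by (rule sum.cong) (auto simp: min_def)
  also have "\<dots> = sum D1 A + sum D2 A - 2 * overlap A D1 D2"
    by (simp add: overlap_def sum.distrib sum_subtractf sum_distrib_left)
  finally show ?thesis unfolding tv_def using assms by simp
qed

lemma overlap_le_overlap_fibers:
  assumes "finite A" "finite B" "g ` A \<subseteq> B"
  shows "overlap A D1 D2
       \<le> (\<Sum>y\<in>B. min (\<Sum>x\<in>{x\<in>A. g x = y}. D1 x) (\<Sum>x\<in>{x\<in>A. g x = y}. D2 x))"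
proof -
  have "overlap A D1 D2 = (\<Sum>y\<in>B. \<Sum>x\<in>{x\<in>A. g x = y}. min (D1 x) (D2 x))"
    unfolding overlap_def using assms by (rule sum.group[symmetric])
  also have "\<dots> \<le> (\<Sum>y\<in>B. min (\<Sum>x\<in>{x\<in>A. g x = y}. D1 x) (\<Sum>x\<in>{x\<in>A. g x = y}. D2 x))"
    by (intro sum_mono) (simp add: sum_mono)
  finally show ?thesis .
qed

lemma min_le_sqrt_mult:
  fixes a b :: real
  assumes "0 \<le> a" "0 \<le> b"
  shows "min a b \<le> sqrt (a * b)"
proof (rule real_le_rsqrt)
  show "(min a b)\<^sup>2 \<le> a * b"
    using assms by (cases "a \<le> b") (auto simp: power2_eq_square intro: mult_mono)
qed

lemma min_sum_le_sum_sqrt: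
  fixes \<alpha> :: "'b \<Rightarrow> real"
  assumes "finite B" "\<And>b. b \<in> B \<Longrightarrow> 0 \<le> \<alpha> b" "0 \<le> \<beta>"
  shows "min (\<Sum>b\<in>B. \<alpha> b) \<beta> \<le> (\<Sum>b\<in>B. sqrt (\<alpha> b * \<beta>))"
  using assms
proof (induction B rule: finite_induct)
  case (insert c B)
  have "0 \<le> sum \<alpha> B" "0 \<le> \<alpha> c" using insert.prems by (auto intro: sum_nonneg)
  then have "min (\<alpha> c + sum \<alpha> B) \<beta> \<le> min (\<alpha> c) \<beta> + min (sum \<alpha> B) \<beta>"
    using insert.prems(2) by (auto simp: min_def)
  also have "\<dots> \<le> sqrt (\<alpha> c * \<beta>) + (\<Sum>b\<in>B. sqrt (\<alpha> b * \<beta>))"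
    using insert by (intro add_mono min_le_sqrt_mult) auto
  finally show ?case using insert by simp
qed simp

lemma real_sqrt_prod: "sqrt (\<Prod>i\<in>I. f i) = (\<Prod>i\<in>I. sqrt (f i))"
  by (induction I rule: infinite_finite_induct) (auto simp: real_sqrt_mult)

lemma bhattacharyya_bool_vecs_prod:
  assumes "finite I"
  shows "bhattacharyya (bool_vecs I) (\<lambda>y. \<Prod>i\<in>I. D i (y i)) (\<lambda>y. \<Prod>i\<in>I. Q i (y i))
       = (\<Prod>i\<in>I. bhattacharyya UNIV (D i) (Q i))"
proof -
  have "(\<Sum>y\<in>bool_vecs I. sqrt ((\<Prod>i\<in>I. D i (y i)) * (\<Prod>i\<in>I. Q i (y i))))
      = (\<Sum>y\<in>bool_vecs I. \<Prod>i\<in>I. sqrt (D i (y i) * Q i (y i)))"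
    by (simp add: prod.distrib[symmetric] real_sqrt_prod)
  also have "\<dots> = (\<Prod>i\<in>I. sqrt (D i True * Q i True) + sqrt (D i False * Q i False))"
    by (rule sum_bool_vecs_prod[OF assms])
  finally show ?thesis
    unfolding bhattacharyya_def by (simp add: UNIV_bool add.commute)
qed

lemma tv_ber: "tv UNIV (ber q) (ber p) = \<bar>q - p\<bar>"
  unfolding tv_def ber_def UNIV_bool by (simp add: abs_minus_commute)

lemma tv_distr_unif_ber_le_1:
  assumes "finite A" "A \<noteq> {}" "0 \<le> p" "p \<le> 1"
  shows "tv UNIV (distr_unif A f) (ber p) \<le> 1"
proof -
  have "real (card {x\<in>A. f x}) / card A \<le> 1" "0 \<le> real (card {x\<in>A. f x}) / card A"
    using assms by (simp_all add: card_mono divide_le_eq_1 card_gt_0_iff)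
  moreover have "tv UNIV (distr_unif A f) (ber p) = \<bar>real (card {x\<in>A. f x}) / card A - p\<bar>"
    using assms by (simp add: distr_unif_eq_ber tv_ber)
  ultimately show ?thesis using assms by arith
qed

lemma bhattacharyya_ber_le:
  assumes q: "0 \<le> q" "q \<le> 1" and p: "0 \<le> p" "p \<le> 1"
  shows "bhattacharyya UNIV (ber q) (ber p) \<le> 1 - (q - p)\<^sup>2 / 2"
proof -
  define a b \<alpha> \<beta> where "a = sqrt q" "b = sqrt (1 - q)" "\<alpha> = sqrt p" "\<beta> = sqrt (1 - p)"
  have sq: "a\<^sup>2 = q" "b\<^sup>2 = 1 - q" "\<alpha>\<^sup>2 = p" "\<beta>\<^sup>2 = 1 - p"
    unfolding a_b_\<alpha>_\<beta>_def using q p by simp_all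
  have BC: "bhattacharyya UNIV (ber q) (ber p) = a * \<alpha> + b * \<beta>"
    unfolding bhattacharyya_def ber_def UNIV_bool a_b_\<alpha>_\<beta>_def by (simp add: real_sqrt_mult)
  have lagrange: "(a*x + b*y)\<^sup>2 + (a*y - b*x)\<^sup>2 = 1" if "x\<^sup>2 + y\<^sup>2 = 1" for x y
  proof -
    have "(a*x + b*y)\<^sup>2 + (a*y - b*x)\<^sup>2 = (a\<^sup>2 + b\<^sup>2) * (x\<^sup>2 + y\<^sup>2)"
      by (simp add: power2_eq_square algebra_simps)
    then show ?thesis using sq that by simp
  qed
  have "(a*\<beta> + b*\<alpha>)\<^sup>2 \<le> 1"
    using lagrange[of \<beta> \<alpha>] sq by (smt (verit) zero_le_power2)
  moreover have "q - p = (a*\<beta> - b*\<alpha>) * (a*\<beta> + b*\<alpha>)"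
  proof -
    have "(a*\<beta> - b*\<alpha>) * (a*\<beta> + b*\<alpha>) = a\<^sup>2 * \<beta>\<^sup>2 - b\<^sup>2 * \<alpha>\<^sup>2"
      by (simp add: power2_eq_square algebra_simps)
    then show ?thesis using sq by (simp add: algebra_simps)
  qed
  ultimately have "(q - p)\<^sup>2 \<le> (a*\<beta> - b*\<alpha>)\<^sup>2"
    by (simp add: power_mult_distrib mult_left_le)
  then have BC2: "(a*\<alpha> + b*\<beta>)\<^sup>2 \<le> 1 - (q - p)\<^sup>2"
    using lagrange[of \<alpha> \<beta>] sq by simp
  have "\<bar>q - p\<bar> \<le> 1" using q p by linarith
  then have "(q - p)\<^sup>2 \<le> 1" by (simp add: abs_square_le_1)
  moreover have "(1 - (q - p)\<^sup>2 / 2)\<^sup>2 = 1 - (q - p)\<^sup>2 + ((q - p)\<^sup>2)\<^sup>2 / 4"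
    by (simp add: power2_eq_square algebra_simps)
  ultimately have "(a*\<alpha> + b*\<beta>)\<^sup>2 \<le> (1 - (q - p)\<^sup>2 / 2)\<^sup>2" "0 \<le> 1 - (q - p)\<^sup>2 / 2"
    using BC2 zero_le_power2[of "(q - p)\<^sup>2"] by linarith+
  then show ?thesis unfolding BC by (rule power2_le_imp_le)
qed

lemma one_minus_le_two_powr:
  fixes t :: real
  assumes "0 \<le> t"
  shows "1 - t \<le> 2 powr (- t)"
proof -
  have "1 + (- t * ln 2) \<le> exp (- t * ln 2)" by (rule exp_ge_add_one_self)
  moreover have "t * ln 2 \<le> t" using assms ln_2_less_1 by (simp add: mult_left_le)
  ultimately show ?thesis by (simp add: powr_def)
qed

lemma bhattacharyya_distr_unif_le:
  assumes A: "finite A" "A \<noteq> {}" and p: "0 \<le> p" "p \<le> 1"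
    and \<delta>: "0 \<le> \<delta>" "\<delta> \<le> tv UNIV (distr_unif A f) (ber p)"
  shows "bhattacharyya UNIV (distr_unif A f) (ber p) \<le> 2 powr (- (\<delta>\<^sup>2 / 2))"
proof -
  define q where "q = card {x\<in>A. f x} / card A"
  have q: "0 \<le> q" "q \<le> 1"
    unfolding q_def using A by (simp_all add: card_mono divide_le_eq_1 card_gt_0_iff)
  have D: "distr_unif A f = ber q"
    unfolding q_def using A by (rule distr_unif_eq_ber)
  have "\<delta>\<^sup>2 \<le> (q - p)\<^sup>2"
    using \<delta> unfolding D tv_ber by (metis abs_le_square_iff abs_of_nonneg)
  have "bhattacharyya UNIV (distr_unif A f) (ber p) \<le> 1 - (q - p)\<^sup>2 / 2"
    unfolding D using q p by (rule bhattacharyya_ber_le)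
  also have "\<dots> \<le> 2 powr (- ((q - p)\<^sup>2 / 2))"
    by (rule one_minus_le_two_powr) simp
  also have "\<dots> \<le> 2 powr (- (\<delta>\<^sup>2 / 2))"
    using \<open>\<delta>\<^sup>2 \<le> (q - p)\<^sup>2\<close> by (intro powr_mono) auto
  finally show ?thesis .
qed

lemma bhattacharyya_cell_le_determined:
  assumes f: "determined_by m a W f" and ne: "cell m a W b \<noteq> {}"
  shows "bhattacharyya UNIV (distr_unif (cell m a W b) f) (ber (1/3)) \<le> 2 powr (- (1/18))"
proof -
  obtain H where H: "\<forall>x\<in>cell m a W b. f x = H (bool_restrict {} (\<lambda>p. dot (a p) x))"
    using determined_by_on_cell[of m a W "{}" f b] f by auto
  define q where "q = real (card {x\<in>cell m a W b. f x}) / card (cell m a W b)"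
  have "\<forall>x\<in>cell m a W b. f x = H (\<lambda>_. False)"
    using H by (simp add: bool_restrict_def)
  then have "{x\<in>cell m a W b. f x} = (if H (\<lambda>_. False) then cell m a W b else {})"
    by auto
  then have "q = (if H (\<lambda>_. False) then 1 else 0)"
    using ne unfolding q_def by (simp add: card_gt_0_iff)
  then have "1/3 \<le> tv UNIV (distr_unif (cell m a W b) f) (ber (1/3))"
    using ne by (simp add: distr_unif_eq_ber tv_ber q_def[symmetric])
  then show ?thesis
    using bhattacharyya_distr_unif_le[of "cell m a W b" "1/3" "1/3" f] ne by (simp add: power2_eq_square)
qed

section \<open>Overlap of the joint law with the product measure\<close>

lemma joint_in_cube [simp]: "joint n P x \<in> cube n"
  unfolding joint_def cube_def by auto

lemma tv_joint_ber_prod_eq: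
  assumes "0 \<le> p" "p \<le> 1"
  shows "tv (cube n) (distr_unif (cube m) (joint n P)) (ber_prod n p)
       = 1 - overlap (cube n) (distr_unif (cube m) (joint n P)) (ber_prod n p)"
proof (rule tv_eq_1_minus_overlap)
  show "sum (distr_unif (cube m) (joint n P)) (cube n) = 1"
    by (rule sum_distr_unif) auto
qed (simp_all add: sum_ber_prod)

lemma overlap_joint_le_marginal:
  assumes I: "I \<subseteq> {..<n}"
  shows "overlap (cube n) (distr_unif (cube m) (joint n P)) (ber_prod n p)
       \<le> overlap (bool_vecs I) (distr_unif (cube m) (\<lambda>x. bool_restrict I (\<lambda>i. P i x)))
           (\<lambda>y. \<Prod>i\<in>I. ber p (y i))"
proof -
  have fI: "finite I" using I finite_subset by blast
  let ?fiber = "\<lambda>y. {z\<in>cube n. bool_restrict I z = y}"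
  have "overlap (cube n) (distr_unif (cube m) (joint n P)) (ber_prod n p)
      \<le> (\<Sum>y\<in>bool_vecs I. min (\<Sum>z\<in>?fiber y. distr_unif (cube m) (joint n P) z)
                                (\<Sum>z\<in>?fiber y. ber_prod n p z))"
    using fI by (intro overlap_le_overlap_fibers) auto
  also have "\<dots> = overlap (bool_vecs I) (distr_unif (cube m) (\<lambda>x. bool_restrict I (\<lambda>i. P i x)))
                    (\<lambda>y. \<Prod>i\<in>I. ber p (y i))"
    unfolding overlap_def
  proof (intro sum.cong refl)
    fix y assume y: "y \<in> bool_vecs I"
    have "(\<Sum>z\<in>?fiber y. distr_unif (cube m) (joint n P) z)
        = distr_unif (cube m) (\<lambda>x. bool_restrict I (joint n P x)) y"
      by (rule distr_unif_comp[symmetric]) auto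
    also have "(\<lambda>x. bool_restrict I (joint n P x)) = (\<lambda>x. bool_restrict I (\<lambda>i. P i x))"
      using I by (auto simp: bool_restrict_def joint_def fun_eq_iff)
    finally have "(\<Sum>z\<in>?fiber y. distr_unif (cube m) (joint n P) z)
        = distr_unif (cube m) (\<lambda>x. bool_restrict I (\<lambda>i. P i x)) y" .
    moreover have "(\<Sum>z\<in>?fiber y. ber_prod n p z) = (\<Prod>i\<in>I. ber p (y i))"
      using sum_bool_vecs_restrict_prod[of "{..<n}" I y "\<lambda>_. ber p"] I y
      by (simp add: ber_prod_def cube_eq_bool_vecs ber_def)
    ultimately show "min (\<Sum>z\<in>?fiber y. distr_unif (cube m) (joint n P) z) (\<Sum>z\<in>?fiber y. ber_prod n p z)
        = min (distr_unif (cube m) (\<lambda>x. bool_restrict I (\<lambda>i. P i x)) y) (\<Prod>i\<in>I. ber p (y i))"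
      by simp
  qed
  finally show ?thesis .
qed

lemma distr_unif_cube_eq_sum_cells:
  assumes W: "finite W"
  shows "distr_unif (cube m) f y
       = (\<Sum>b\<in>bool_vecs W. card (cell m a W b) / card (cube m) * distr_unif (cell m a W b) f y)"
proof -
  let ?forms = "\<lambda>x. bool_restrict W (\<lambda>p. dot (a p) x)"
  have "real (card {x\<in>cube m. f x = y})
      = (\<Sum>b\<in>bool_vecs W. real (card {x\<in>{x\<in>cube m. f x = y}. ?forms x = b}))"
    using sum.group[of "{x\<in>cube m. f x = y}" "bool_vecs W" ?forms "\<lambda>_. 1 :: real"] W
    by (simp add: image_subset_iff)
  also have "\<dots> = (\<Sum>b\<in>bool_vecs W. real (card {x\<in>cell m a W b. f x = y}))"
  proof (intro sum.cong refl arg_cong[where f = "\<lambda>X. real (card X)"])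
    fix b assume "b \<in> bool_vecs W"
    then show "{x\<in>{x\<in>cube m. f x = y}. ?forms x = b} = {x\<in>cell m a W b. f x = y}"
      unfolding cell_def by (auto simp: bool_restrict_eq_iff)
  qed
  also have "\<dots> = (\<Sum>b\<in>bool_vecs W. real (card (cell m a W b)) * distr_unif (cell m a W b) f y)"
    unfolding distr_unif_def by (intro sum.cong refl) (auto simp: card_gt_0_iff)
  finally show ?thesis
    unfolding distr_unif_def[of "cube m"] by (simp add: sum_divide_distrib)
qed

lemma bhattacharyya_cell_joint_le:
  assumes W: "finite W" and I: "finite I" and C: "\<And>i. i \<in> I \<Longrightarrow> finite (C i)"
    and disj: "disjoint_family_on C I" and ind: "indep_mod m a W (\<Union>i\<in>I. C i)"
    and P: "\<And>i. i \<in> I \<Longrightarrow> determined_by m a (W \<union> C i) (P i)"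
    and p: "0 \<le> p" "p \<le> 1" and \<rho>: "0 \<le> \<rho>"
    and bound: "\<And>i. i \<in> I \<Longrightarrow> cell m a W b \<noteq> {}
                  \<Longrightarrow> bhattacharyya UNIV (distr_unif (cell m a W b) (P i)) (ber p) \<le> \<rho>"
  shows "bhattacharyya (bool_vecs I) (distr_unif (cell m a W b) (\<lambda>x. bool_restrict I (\<lambda>i. P i x)))
           (\<lambda>y. \<Prod>i\<in>I. ber p (y i)) \<le> \<rho> ^ card I"
proof (cases "cell m a W b = {}")
  case True
  then show ?thesis using \<rho> by (simp add: bhattacharyya_def distr_unif_def)
next
  case False
  have "bhattacharyya (bool_vecs I) (distr_unif (cell m a W b) (\<lambda>x. bool_restrict I (\<lambda>i. P i x)))
          (\<lambda>y. \<Prod>i\<in>I. ber p (y i))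
      = bhattacharyya (bool_vecs I) (\<lambda>y. \<Prod>i\<in>I. distr_unif (cell m a W b) (P i) (y i))
          (\<lambda>y. \<Prod>i\<in>I. ber p (y i))"
    unfolding bhattacharyya_def
    by (intro sum.cong refl) (simp add: distr_unif_cell_joint[OF W I C disj ind P False])
  also have "\<dots> = (\<Prod>i\<in>I. bhattacharyya UNIV (distr_unif (cell m a W b) (P i)) (ber p))"
    by (rule bhattacharyya_bool_vecs_prod[OF I])
  also have "\<dots> \<le> (\<Prod>i\<in>I. \<rho>)"
    using bound False p by (intro prod_mono) (auto simp: bhattacharyya_def ber_def intro!: sum_nonneg)
  finally show ?thesis by simp
qed

lemma overlap_joint_le:
  fixes a :: "'p \<Rightarrow> nat \<Rightarrow> bool" and C :: "nat \<Rightarrow> 'p set"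
  assumes p: "0 \<le> p" "p \<le> 1" and I: "I \<subseteq> {..<n}" and W: "finite W"
    and C: "\<And>i. i \<in> I \<Longrightarrow> finite (C i)" and disj: "disjoint_family_on C I"
    and ind: "indep_mod m a W (\<Union>i\<in>I. C i)"
    and P: "\<And>i. i \<in> I \<Longrightarrow> determined_by m a (W \<union> C i) (P i)"
    and \<rho>: "0 \<le> \<rho>"
    and bound: "\<And>i b. i \<in> I \<Longrightarrow> cell m a W b \<noteq> {}
                  \<Longrightarrow> bhattacharyya UNIV (distr_unif (cell m a W b) (P i)) (ber p) \<le> \<rho>"
  shows "overlap (cube n) (distr_unif (cube m) (joint n P)) (ber_prod n p) \<le> 2 ^ card W * \<rho> ^ card I"
proof -
  have fI: "finite I" using I finite_subset by blast
  let ?J = "\<lambda>x. bool_restrict I (\<lambda>i. P i x)" and ?Q = "\<lambda>y. \<Prod>i\<in>I. ber p (y i)"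
  let ?w = "\<lambda>b. card (cell m a W b) / card (cube m)" and ?D = "\<lambda>b. distr_unif (cell m a W b) ?J"
  have Q: "0 \<le> ?Q y" for y using p by (auto intro: prod_nonneg simp: ber_def)
  have w: "0 \<le> ?w b" "?w b \<le> 1" for b
    by (simp_all add: card_mono cell_subset_cube divide_le_eq_1 card_gt_0_iff)
  have "overlap (cube n) (distr_unif (cube m) (joint n P)) (ber_prod n p)
      \<le> overlap (bool_vecs I) (distr_unif (cube m) ?J) ?Q"
    by (rule overlap_joint_le_marginal[OF I])
  also have "\<dots> = (\<Sum>y\<in>bool_vecs I. min (\<Sum>b\<in>bool_vecs W. ?w b * ?D b y) (?Q y))"
    unfolding overlap_def by (simp only: distr_unif_cube_eq_sum_cells[OF W, of m ?J _ a])
  also have "\<dots> \<le> (\<Sum>y\<in>bool_vecs I. \<Sum>b\<in>bool_vecs W. sqrt (?w b * ?D b y * ?Q y))"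
    using W w Q by (intro sum_mono min_sum_le_sum_sqrt) auto
  also have "\<dots> = (\<Sum>y\<in>bool_vecs I. \<Sum>b\<in>bool_vecs W. sqrt (?w b) * sqrt (?D b y * ?Q y))"
    by (intro sum.cong refl) (simp add: real_sqrt_mult real_sqrt_divide mult.assoc)
  also have "\<dots> = (\<Sum>b\<in>bool_vecs W. sqrt (?w b) * bhattacharyya (bool_vecs I) (?D b) ?Q)"
    unfolding bhattacharyya_def sum_distrib_left by (rule sum.swap)
  also have "\<dots> \<le> (\<Sum>b\<in>bool_vecs W. 1 * \<rho> ^ card I)"
  proof (rule sum_mono)
    fix b
    have "0 \<le> bhattacharyya (bool_vecs I) (?D b) ?Q"
      unfolding bhattacharyya_def using Q by (intro sum_nonneg) simp
    moreover have "bhattacharyya (bool_vecs I) (?D b) ?Q \<le> \<rho> ^ card I"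
      using W fI C disj ind P p \<rho> bound by (intro bhattacharyya_cell_joint_le) auto
    moreover have "sqrt (?w b) \<le> 1" using w by simp
    ultimately show "sqrt (?w b) * bhattacharyya (bool_vecs I) (?D b) ?Q \<le> 1 * \<rho> ^ card I"
      by (intro mult_mono) auto
  qed
  also have "\<dots> = 2 ^ card W * \<rho> ^ card I"
    using card_bool_vecs[OF W] by simp
  finally show ?thesis .
qed

section \<open>The iteration\<close>

lemma two_power_mult_powr_power: "(2::real) ^ w * (2 powr s) ^ t = 2 powr (real w + real t * s)"
  by (simp add: powr_power powr_add powr_realpow)

lemma exists_maximal_subset:
  assumes A: "finite A" and Q: "Q {}"
  shows "\<exists>I\<subseteq>A. Q I \<and> (\<forall>j\<in>A - I. \<not> Q (insert j I))"
proof -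
  obtain I where I: "I \<subseteq> A" "Q I" and max: "\<And>J. J \<subseteq> A \<Longrightarrow> Q J \<Longrightarrow> card J \<le> card I"
    using ex_has_greatest_nat[of "\<lambda>I. I \<subseteq> A \<and> Q I" "{}" card "Suc (card A)"] A Q
    by (metis card_mono empty_subsetI le_imp_less_Suc)
  have "\<not> Q (insert j I)" if "j \<in> A - I" for j
    using max[of "insert j I"] that I A by (auto dest: finite_subset)
  then show ?thesis using I by blast
qed

text \<open>\<open>stage_rate \<delta> k\<close> is the exponent obtained when every function still depends on at most
  \<open>k\<close> free forms. The value \<open>1/18\<close> at \<open>k = 0\<close> comes from functions constant on cells; the factor
  \<open>\<delta>\<^sup>2 / (3 k)\<close> is what lets both cases of the induction step close.\<close>

definition stage_rate :: "real \<Rightarrow> nat \<Rightarrow> real" where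
  "stage_rate \<delta> k = (\<delta>\<^sup>2 / 3) ^ k / (18 * fact k)"

lemma stage_rate_nonneg: "0 \<le> stage_rate \<delta> k"
  by (simp add: stage_rate_def)

lemma stage_rate_Suc: "stage_rate \<delta> (Suc k) = stage_rate \<delta> k * \<delta>\<^sup>2 / (3 * real (Suc k))"
  by (simp add: stage_rate_def field_simps)

lemma stage_rate_step:
  assumes "\<delta> \<noteq> 0" "\<delta>\<^sup>2 \<le> 1"
  shows "real (Suc k) * (2 * stage_rate \<delta> (Suc k) / \<delta>\<^sup>2) \<le> stage_rate \<delta> k - stage_rate \<delta> (Suc k)"
proof -
  have eq: "real (Suc k) * (2 * stage_rate \<delta> (Suc k) / \<delta>\<^sup>2) = 2/3 * stage_rate \<delta> k"
  proof -
    have cancel: "s * (2 * (R * e / (3 * s)) / e) = 2/3 * R" if "s \<noteq> 0" "e \<noteq> 0" for s e R :: real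
      using that by (simp add: field_simps)
    have "real (Suc k) \<noteq> 0" "\<delta>\<^sup>2 \<noteq> 0" using assms(1) by simp_all
    then show ?thesis unfolding stage_rate_Suc by (rule cancel)
  qed
  have "stage_rate \<delta> (Suc k) \<le> stage_rate \<delta> k * (1/3)"
  proof -
    have "\<delta>\<^sup>2 \<le> real (Suc k)" using assms(2) by simp
    then have "\<delta>\<^sup>2 / (3 * real (Suc k)) \<le> 1/3" by (simp add: field_simps)
    then show ?thesis
      unfolding stage_rate_Suc times_divide_eq_right[symmetric]
      using stage_rate_nonneg by (rule mult_left_mono)
  qed
  then show ?thesis unfolding eq by linarith
qed

lemma stage_rate_ge:
  assumes "1 \<le> r"
  shows "(1/54) ^ r * \<delta> ^ (2 * r) / fact r \<le> stage_rate \<delta> r"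
proof -
  have "(3::real) ^ r * 18 \<le> 3 ^ r * 18 ^ r"
    using assms by (simp add: self_le_power)
  also have "\<dots> = 54 ^ r" by (simp flip: power_mult_distrib)
  finally have "3 ^ r * 18 * fact r \<le> (54::real) ^ r * fact r" by simp
  then have "(\<delta>\<^sup>2) ^ r / (54 ^ r * fact r) \<le> (\<delta>\<^sup>2) ^ r / (3 ^ r * 18 * fact r)"
    by (intro divide_left_mono) simp_all
  moreover have "(1/54) ^ r * \<delta> ^ (2 * r) / fact r = (\<delta>\<^sup>2) ^ r / (54 ^ r * fact r)"
    by (simp add: power_mult power_one_over)
  moreover have "stage_rate \<delta> r = (\<delta>\<^sup>2) ^ r / (3 ^ r * 18 * fact r)"
    by (simp add: stage_rate_def power_divide)
  ultimately show ?thesis by simp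
qed

lemma determined_by_reduce_family:
  fixes n :: nat
  assumes W: "finite W"
    and D: "\<And>j. j < n \<Longrightarrow> finite (D j) \<and> card (D j) \<le> Suc k \<and> determined_by m a (W \<union> D j) (P j)"
    and I: "I \<subseteq> {..<n}" "indep_mod m a W (\<Union>i\<in>I. D i)"
    and maximal: "\<And>j. j < n \<Longrightarrow> j \<notin> I \<Longrightarrow> \<not> indep_mod m a W (\<Union>i\<in>insert j I. D i)"
  shows "\<exists>D'. \<forall>j<n. D' j \<subseteq> D j \<and> card (D' j) \<le> k
                  \<and> determined_by m a (W \<union> (\<Union>i\<in>I. D i) \<union> D' j) (P j)"
proof -
  let ?L = "\<Union>i\<in>I. D i"
  have "finite I" by (rule finite_subset[OF I(1)]) simp
  then have L: "finite ?L" using I(1) D by (intro finite_UN_I) auto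
  have "\<exists>D'. D' \<subseteq> D j \<and> card D' \<le> k \<and> determined_by m a (W \<union> ?L \<union> D') (P j)" if j: "j < n" for j
  proof (cases "j \<in> I")
    case True
    then have "determined_by m a (W \<union> ?L \<union> {}) (P j)"
      using D[OF j] by (elim conjE determined_by_mono) auto
    then show ?thesis by (intro exI[of _ "{}"]) auto
  next
    case False
    have "\<not> indep_mod m a W (D j \<union> ?L)" using maximal[OF j False] by simp
    then obtain p0 where "p0 \<in> D j" "determined_by m a (W \<union> ?L \<union> (D j - {p0})) (P j)"
      using determined_by_drop_dependent[OF W _ L I(2)] D[OF j] by blast
    moreover from this(1) have "card (D j - {p0}) \<le> k"
      using D[OF j] by (elim conjE) (simp add: card_Diff_singleton le_diff_conv)
    ultimately show ?thesis by blast
  qed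
  then have "\<forall>j\<in>{..<n}. \<exists>D'. D' \<subseteq> D j \<and> card D' \<le> k \<and> determined_by m a (W \<union> ?L \<union> D') (P j)"
    by blast
  then obtain D' where "\<forall>j\<in>{..<n}. D' j \<subseteq> D j \<and> card (D' j) \<le> k
                                  \<and> determined_by m a (W \<union> ?L \<union> D' j) (P j)"
    by (rule bchoice[THEN exE])
  then show ?thesis by (intro exI[of _ D']) auto
qed

lemma overlap_joint_le_stage:
  fixes a :: "'p \<Rightarrow> nat \<Rightarrow> bool" and D :: "nat \<Rightarrow> 'p set"
  assumes \<delta>: "0 < \<delta>" "\<delta> \<le> 1"
    and bias: "\<And>i W b. i < n \<Longrightarrow> cell m a W b \<noteq> {}
                 \<Longrightarrow> \<delta> \<le> tv UNIV (distr_unif (cell m a W b) (P i)) (ber (1/3))"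
  shows "finite W \<Longrightarrow> disjoint_family_on D {..<n}
    \<Longrightarrow> (\<And>j. j < n \<Longrightarrow> finite (D j) \<and> card (D j) \<le> k \<and> determined_by m a (W \<union> D j) (P j))
    \<Longrightarrow> overlap (cube n) (distr_unif (cube m) (joint n P)) (ber_prod n (1/3))
          \<le> 2 powr (card W - stage_rate \<delta> k * n)"
proof (induction k arbitrary: W D)
  case 0
  then have "determined_by m a W (P j)" if "j < n" for j
    using that by fastforce
  then have "overlap (cube n) (distr_unif (cube m) (joint n P)) (ber_prod n (1/3))
           \<le> 2 ^ card W * (2 powr (- (1/18))) ^ card {..<n}"
    using 0 by (intro overlap_joint_le[where C = "\<lambda>_. {}"])
      (auto simp: disjoint_family_on_def intro: bhattacharyya_cell_le_determined)
  then show ?case by (simp add: two_power_mult_powr_power stage_rate_def)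
next
  case (Suc k)
  obtain I where I: "I \<subseteq> {..<n}" "indep_mod m a W (\<Union>i\<in>I. D i)"
    and maximal: "\<And>j. j \<in> {..<n} - I \<Longrightarrow> \<not> indep_mod m a W (\<Union>i\<in>insert j I. D i)"
    using exists_maximal_subset[of "{..<n}" "\<lambda>I. indep_mod m a W (\<Union>i\<in>I. D i)"] by auto
  let ?L = "\<Union>i\<in>I. D i"
  have fin: "finite I" "finite ?L" using I Suc.prems(3) finite_subset by blast+
  show ?case
  proof (cases "stage_rate \<delta> (Suc k) * n \<le> \<delta>\<^sup>2 / 2 * card I")
    case True
    have "bhattacharyya UNIV (distr_unif (cell m a W b) (P i)) (ber (1/3)) \<le> 2 powr (- (\<delta>\<^sup>2 / 2))"
      if "i \<in> I" "cell m a W b \<noteq> {}" for i b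
      using that I(1) \<delta> by (intro bhattacharyya_distr_unif_le bias) auto
    then have "overlap (cube n) (distr_unif (cube m) (joint n P)) (ber_prod n (1/3))
        \<le> 2 ^ card W * (2 powr (- (\<delta>\<^sup>2 / 2))) ^ card I"
      using Suc.prems I disjoint_family_on_mono[OF I(1) Suc.prems(2)]
      by (intro overlap_joint_le[where C = D]) auto
    also have "\<dots> \<le> 2 powr (card W - stage_rate \<delta> (Suc k) * n)"
      using True by (simp add: two_power_mult_powr_power mult_ac)
    finally show ?thesis .
  next
    case False
    obtain D' where D': "\<And>j. j < n \<Longrightarrow> D' j \<subseteq> D j \<and> card (D' j) \<le> k
                                      \<and> determined_by m a (W \<union> ?L \<union> D' j) (P j)"
      using determined_by_reduce_family[OF Suc.prems(1,3) I] maximal by blast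
    have "disjoint_family_on D' {..<n}"
      using Suc.prems(2) D' unfolding disjoint_family_on_def by blast
    then have "overlap (cube n) (distr_unif (cube m) (joint n P)) (ber_prod n (1/3))
             \<le> 2 powr (card (W \<union> ?L) - stage_rate \<delta> k * n)"
      using Suc.prems D' fin by (intro Suc.IH) (auto dest: finite_subset)
    also have "\<dots> \<le> 2 powr (card W - stage_rate \<delta> (Suc k) * n)"
    proof (rule powr_mono)
      have "card ?L \<le> (\<Sum>i\<in>I. card (D i))" by (rule card_UN_le[OF fin(1)])
      also have "\<dots> \<le> Suc k * card I"
        using sum_bounded_above[of I "\<lambda>i. card (D i)" "Suc k"] Suc.prems(3) I(1) by (auto simp: mult.commute)
      finally have "card (W \<union> ?L) \<le> card W + Suc k * card I"
        using card_Un_le[of W ?L] by linarith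
      then have "real (card (W \<union> ?L)) \<le> card W + real (Suc k) * card I"
        by (metis of_nat_add of_nat_le_iff of_nat_mult)
      also have "\<dots> \<le> card W + real (Suc k) * (2 * stage_rate \<delta> (Suc k) / \<delta>\<^sup>2 * n)"
        using False \<delta>(1) by (intro add_left_mono mult_left_mono) (simp_all add: field_simps)
      also have "\<dots> \<le> card W + (stage_rate \<delta> k - stage_rate \<delta> (Suc k)) * n"
      proof -
        have "real (Suc k) * (2 * stage_rate \<delta> (Suc k) / \<delta>\<^sup>2) * n
            \<le> (stage_rate \<delta> k - stage_rate \<delta> (Suc k)) * n"
          using stage_rate_step[of \<delta> k] \<delta> by (intro mult_right_mono) (simp_all add: power_le_one)
        then show ?thesis by (simp add: mult.assoc)
      qed
      finally show "card (W \<union> ?L) - stage_rate \<delta> k * n \<le> card W - stage_rate \<delta> (Suc k) * n"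
        by (simp add: algebra_simps)
    qed simp
    finally show ?thesis .
  qed
qed

lemma overlap_joint_le_powr:
  fixes a :: "'p \<Rightarrow> nat \<Rightarrow> bool" and D :: "nat \<Rightarrow> 'p set"
  assumes r: "1 \<le> r" and \<delta>: "0 < \<delta>"
    and bias: "\<And>i W b. i < n \<Longrightarrow> cell m a W b \<noteq> {}
                 \<Longrightarrow> \<delta> \<le> tv UNIV (distr_unif (cell m a W b) (P i)) (ber (1/3))"
    and disj: "disjoint_family_on D {..<n}"
    and D: "\<And>i. i < n \<Longrightarrow> finite (D i) \<and> card (D i) \<le> r \<and> determined_by m a (D i) (P i)"
  shows "overlap (cube n) (distr_unif (cube m) (joint n P)) (ber_prod n (1/3))
       \<le> 2 powr (- ((1/54) ^ r * \<delta> ^ (2 * r) / fact r) * n)"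
proof (cases "n = 0")
  case True
  have "overlap (cube n) (distr_unif (cube m) (joint n P)) (ber_prod n (1/3))
      \<le> sum (ber_prod n (1/3)) (cube n)"
    unfolding overlap_def by (intro sum_mono) simp
  then show ?thesis using True by (simp add: sum_ber_prod)
next
  case False
  then have "\<delta> \<le> tv UNIV (distr_unif (cube m) (P 0)) (ber (1/3))"
    using bias[of 0 "{}"] by simp
  also have "\<dots> \<le> 1" by (rule tv_distr_unif_ber_le_1) auto
  finally have "\<delta> \<le> 1" .
  then have "overlap (cube n) (distr_unif (cube m) (joint n P)) (ber_prod n (1/3))
           \<le> 2 powr (card ({} :: 'p set) - stage_rate \<delta> r * n)"
    using \<delta> bias disj D by (intro overlap_joint_le_stage) auto
  also have "\<dots> \<le> 2 powr (- ((1/54) ^ r * \<delta> ^ (2 * r) / fact r) * n)"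
    using mult_right_mono[OF stage_rate_ge[OF r, of \<delta>], of "real n"] by (intro powr_mono) auto
  finally show ?thesis .
qed

theorem theorem8p1:
  shows "\<exists>c::real. c > 0 \<and>
    (\<forall>(r::nat) (\<delta>::real) (n::nat) (m::nat) (P :: nat \<Rightarrow> (nat \<Rightarrow> bool) \<Rightarrow> bool).
      1 \<le> r \<longrightarrow> \<delta> > 0 \<longrightarrow>
      (\<forall>i<n. rank1 m (P i) \<le> r) \<longrightarrow>
      (\<forall>i<n. \<forall>V h. lin_subspace m V \<longrightarrow> h \<in> cube m \<longrightarrow>
          tv UNIV (distr_unif (affine_sub m V h) (P i)) (ber (1/3)) \<ge> \<delta>) \<longrightarrow>
      tv (cube n) (distr_unif (cube m) (joint n P)) (ber_prod n (1/3))
        \<ge> 1 - 2 powr (- (c ^ r * \<delta> ^ (2 * r) / fact r) * real n + real r))"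
proof (intro exI[of _ "1/54"] conjI allI impI)
  fix r n m :: nat and \<delta> :: real and P :: "nat \<Rightarrow> (nat \<Rightarrow> bool) \<Rightarrow> bool"
  assume r: "1 \<le> r" and \<delta>: "\<delta> > 0" and rank: "\<forall>i<n. rank1 m (P i) \<le> r"
    and hyp: "\<forall>i<n. \<forall>V h. lin_subspace m V \<longrightarrow> h \<in> cube m \<longrightarrow>
                tv UNIV (distr_unif (affine_sub m V h) (P i)) (ber (1/3)) \<ge> \<delta>"
  obtain a where forms: "\<forall>i<n. determined_by m a (Pair i ` {..<r}) (P i)"
    using exists_forms_of_rank1_le[OF rank] by blast
  have bias: "\<delta> \<le> tv UNIV (distr_unif (cell m a W b) (P i)) (ber (1/3))"
    if "i < n" "cell m a W b \<noteq> {}" for i W b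
    using hyp that by (intro tv_cell_ge_of_affine_sub) auto
  have "overlap (cube n) (distr_unif (cube m) (joint n P)) (ber_prod n (1/3))
      \<le> 2 powr (- ((1/54) ^ r * \<delta> ^ (2 * r) / fact r) * n)"
    using r \<delta> bias forms
    by (intro overlap_joint_le_powr[where D = "\<lambda>i. Pair i ` {..<r}"])
      (auto simp: disjoint_family_on_def card_image inj_on_def)
  also have "\<dots> \<le> 2 powr (- ((1/54) ^ r * \<delta> ^ (2 * r) / fact r) * n + r)"
    by (intro powr_mono) auto
  finally show "1 - 2 powr (- ((1/54) ^ r * \<delta> ^ (2 * r) / fact r) * real n + real r)
              \<le> tv (cube n) (distr_unif (cube m) (joint n P)) (ber_prod n (1/3))"
    by (simp add: tv_joint_ber_prod_eq)
qed simp

end
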